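(* Let $n>2$. Then the following statement is false: "for every $A\in\mathrm{Hull}(\Lambda_2(3,n))$ we have $\operatorname{Per}(A)\ge(n!/n^n)^{2}$, with equality if and only if $A=n^{-2}J_n^3$." That is, there exists $A\in\mathrm{Hull}(\Lambda_2(3,n))$ such that either $\operatorname{Per}(A)<(n!/n^n)^2$, or $\operatorname{Per}(A)=(n!/n^n)^2$ and $A\neq n^{-2}J_n^3$.
   Context: Let $I_n=\{1,\dots,n\}$. A $3$-dimensional matrix of order $n$ is a function $I_n^3\to\mathbb R$. A $2$-plane is the set of positions with one coordinate fixed. $\Lambda_2(3,n)$ is the set of $(0,1)$-valued $3$-dimensional matrices of order $n$ with exactly one $1$ in each $2$-plane. $\mathrm{Hull}(X)$ denotes the convex hull of $X$. A diagonal is a selection of $n$ positions any two of which differ in every coordinate; $\operatorname{Per}(A)$ is the sum over diagonals of the product of the entries on the diagonal. $J_n^3$ is the $3$-dimensional matrix of order $n$ with all entries $1$. *)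

theory Defs
  imports "HOL-Analysis.Analysis"
begin

text \<open>A 3-dimensional matrix of order n = CARD('n) is an element of real^'n^'n^'n,
  entry at position (i,j,k) is A$i$j$k.  The index set I_n is the finite type 'n.\<close>

type_synonym ('n) mat3 = "real ^ 'n ^ 'n ^ 'n"

definition entry3 :: "'n::finite mat3 \<Rightarrow> 'n \<times> 'n \<times> 'n \<Rightarrow> real" where
  "entry3 A p = (case p of (i, j, k) \<Rightarrow> A $ i $ j $ k)"

definition Lambda2 :: "'n::finite mat3 set" where
  "Lambda2 = {A. (\<forall>i j k. A $ i $ j $ k = 0 \<or> A $ i $ j $ k = 1)
     \<and> (\<forall>i. \<exists>!p. A $ i $ fst p $ snd p = 1)
     \<and> (\<forall>j. \<exists>!p. A $ fst p $ j $ snd p = 1)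
     \<and> (\<forall>k. \<exists>!p. A $ fst p $ snd p $ k = 1)}"

definition diagonals3 :: "('n::finite \<times> 'n \<times> 'n) set set" where
  "diagonals3 = {D. card D = CARD('n) \<and>
     (\<forall>p\<in>D. \<forall>q\<in>D. p \<noteq> q \<longrightarrow>
        fst p \<noteq> fst q \<and> fst (snd p) \<noteq> fst (snd q) \<and> snd (snd p) \<noteq> snd (snd q))}"

definition per3 :: "'n::finite mat3 \<Rightarrow> real" where
  "per3 A = (\<Sum>D\<in>diagonals3. \<Prod>p\<in>D. entry3 A p)"

definition J3 :: "'n::finite mat3" where
  "J3 = (\<chi> i j k. 1)"

end

theory Submission
  imports Defs "HOL-Combinatorics.Permutations"
begin

(* The matrix J/n^2 is the barycentre of the matrices perm_pair_mat sigma tau in Lambda_2, which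
   carry a single 1 at (i, sigma i, tau i) for every i.  For x = e_p - e_q the cube X with entries
   x_i x_j x_k is a signed combination of these matrices with total weight zero, so
   A_s = J/n^2 + s X stays in the hull for small |s|.  Writing Per as a sum over pairs of
   permutations, only the factors at i = p and i = q feel the perturbation, and with c = 1/n^2
     Per(A_s) + Per(A_-s) = sum over (sigma, tau) of 2 c^(n-2) (c^2 - s^2 g(sigma, tau)),
   where g >= 0 and g(id, id) = 1.  So Per(A_s) + Per(A_-s) < 2 (n!/n^n)^2, and one of A_s, A_-s
   has permanent strictly below (n!/n^n)^2. *)

lemma card_permutes_with_value:
  fixes i j :: "'n::finite"
  shows "real (card {\<sigma>. \<sigma> permutes (UNIV::'n set) \<and> \<sigma> i = j}) = fact CARD('n) / CARD('n)"
proof -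
  define F where "F j = {\<sigma>. \<sigma> permutes (UNIV::'n set) \<and> \<sigma> i = j}" for j
  have card_F: "card (F j) = card (F i)" for j
  proof -
    have "bij_betw (\<lambda>\<sigma>. Transposition.transpose i j \<circ> \<sigma>) (F i) (F j)"
      by (rule bij_betw_byWitness[where f' = "\<lambda>\<sigma>. Transposition.transpose i j \<circ> \<sigma>"])
         (auto simp: F_def permutes_compose permutes_swap_id)
    then show ?thesis by (simp add: bij_betw_same_card)
  qed
  have "(\<Union>j. F j) = {\<sigma>. \<sigma> permutes UNIV}"
    unfolding F_def by blast
  then have "fact CARD('n) = card (\<Union>j. F j)"
    using card_permutations[OF refl, of "UNIV::'n set"] by simp
  also have "\<dots> = (\<Sum>j\<in>UNIV. card (F j))"
    by (rule card_UN_disjoint) (auto simp: F_def)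
  also have "\<dots> = (\<Sum>j::'n\<in>UNIV. card (F i))"
    by (intro sum.cong refl card_F)
  also have "\<dots> = CARD('n) * card (F i)"
    by simp
  finally have "fact CARD('n) = real (CARD('n) * card (F i))"
    by (metis of_nat_fact)
  then show ?thesis
    using card_F[of j] by (simp add: F_def field_simps)
qed

definition perm_diagonal :: "('n \<Rightarrow> 'n) \<Rightarrow> ('n \<Rightarrow> 'n) \<Rightarrow> ('n \<times> 'n \<times> 'n) set" where
  "perm_diagonal \<sigma> \<tau> = range (\<lambda>i. (i, \<sigma> i, \<tau> i))"

lemma perm_diagonal_in_diagonals3:
  fixes \<sigma> \<tau> :: "'n::finite \<Rightarrow> 'n"
  assumes "\<sigma> permutes UNIV" "\<tau> permutes UNIV"
  shows "perm_diagonal \<sigma> \<tau> \<in> diagonals3"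
proof -
  have "inj \<sigma>" "inj \<tau>"
    using assms permutes_inj by auto
  moreover have "card (perm_diagonal \<sigma> \<tau>) = CARD('n)"
    unfolding perm_diagonal_def by (rule card_image) (auto simp: inj_on_def)
  ultimately show ?thesis
    by (auto simp: diagonals3_def perm_diagonal_def inj_eq)
qed

lemma diagonals3_obtain_perm_diagonal:
  fixes D :: "('n::finite \<times> 'n \<times> 'n) set"
  assumes "D \<in> diagonals3"
  obtains \<sigma> \<tau> where "\<sigma> permutes UNIV" "\<tau> permutes UNIV" "D = perm_diagonal \<sigma> \<tau>"
proof -
  have card_D: "card D = CARD('n)"
    and distinct: "\<And>z z'. z \<in> D \<Longrightarrow> z' \<in> D \<Longrightarrow> z \<noteq> z' \<Longrightarrow>
        fst z \<noteq> fst z' \<and> fst (snd z) \<noteq> fst (snd z') \<and> snd (snd z) \<noteq> snd (snd z')"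
    using assms unfolding diagonals3_def by blast+
  have inj_fst: "inj_on fst D"
    using distinct by (meson inj_onI)
  then have "fst ` D = UNIV"
    using card_D by (simp add: card_image card_eq_UNIV_imp_eq_UNIV)
  define g where "g = inv_into D fst"
  have g_in: "g i \<in> D" and fst_g: "fst (g i) = i" for i
    using \<open>fst ` D = UNIV\<close> by (auto simp: g_def inv_into_into f_inv_into_f)
  have "D = range g"
    using inv_into_image_cancel[OF inj_fst, of D] \<open>fst ` D = UNIV\<close> by (simp add: g_def)
  define \<sigma> where "\<sigma> i = fst (snd (g i))" for i
  define \<tau> where "\<tau> i = snd (snd (g i))" for i
  have "inj \<sigma>" "inj \<tau>"
    using distinct[OF g_in g_in] fst_g by (metis \<sigma>_def \<tau>_def injI)+
  then have "\<sigma> permutes UNIV" "\<tau> permutes UNIV"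
    by (auto intro: bij_imp_permutes simp: bij_def finite_UNIV_inj_surj)
  moreover have "D = perm_diagonal \<sigma> \<tau>"
    unfolding \<open>D = range g\<close> perm_diagonal_def \<sigma>_def \<tau>_def
    by (metis fst_g prod.collapse)
  ultimately show thesis
    using that by blast
qed

lemma perm_diagonal_inject:
  assumes "perm_diagonal \<sigma> \<tau> = perm_diagonal \<sigma>' \<tau>'"
  shows "\<sigma> = \<sigma>' \<and> \<tau> = \<tau>'"
proof -
  have "(i, \<sigma> i, \<tau> i) \<in> perm_diagonal \<sigma>' \<tau>'" for i
    using assms unfolding perm_diagonal_def by blast
  then show ?thesis
    unfolding perm_diagonal_def by fastforce
qed

lemma per3_eq_sum_permutes:
  fixes A :: "'n::finite mat3"
  shows "per3 A = (\<Sum>(\<sigma>, \<tau>) \<in> {\<sigma>. \<sigma> permutes UNIV} \<times> {\<tau>. \<tau> permutes UNIV}. \<Prod>i\<in>UNIV. A $ i $ \<sigma> i $ \<tau> i)"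
proof -
  let ?P = "{\<sigma>::'n \<Rightarrow> 'n. \<sigma> permutes UNIV}"
  have "bij_betw (\<lambda>(\<sigma>, \<tau>). perm_diagonal \<sigma> \<tau>) (?P \<times> ?P) diagonals3"
    unfolding bij_betw_def
  proof
    show "inj_on (\<lambda>(\<sigma>, \<tau>). perm_diagonal \<sigma> \<tau>) (?P \<times> ?P)"
      by (auto simp: inj_on_def dest: perm_diagonal_inject)
    show "(\<lambda>(\<sigma>, \<tau>). perm_diagonal \<sigma> \<tau>) ` (?P \<times> ?P) = diagonals3"
      by (auto simp: perm_diagonal_in_diagonals3 image_iff elim: diagonals3_obtain_perm_diagonal)
  qed
  then have "per3 A = (\<Sum>(\<sigma>, \<tau>) \<in> ?P \<times> ?P. \<Prod>z \<in> perm_diagonal \<sigma> \<tau>. entry3 A z)"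
    unfolding per3_def by (subst sum.reindex_bij_betw[symmetric]) (auto simp: case_prod_unfold)
  also have "\<dots> = (\<Sum>(\<sigma>, \<tau>) \<in> ?P \<times> ?P. \<Prod>i\<in>UNIV. A $ i $ \<sigma> i $ \<tau> i)"
    unfolding perm_diagonal_def
    by (subst prod.reindex) (auto simp: inj_on_def entry3_def)
  finally show ?thesis .
qed

definition perm_pair_mat :: "('n::finite \<Rightarrow> 'n) \<Rightarrow> ('n \<Rightarrow> 'n) \<Rightarrow> 'n mat3" where
  "perm_pair_mat \<sigma> \<tau> = (\<chi> i j k. of_bool (\<sigma> i = j \<and> \<tau> i = k))"

lemma perm_pair_mat_in_Lambda2:
  assumes \<sigma>: "\<sigma> permutes UNIV" and \<tau>: "\<tau> permutes UNIV"
  shows "perm_pair_mat \<sigma> \<tau> \<in> Lambda2"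
proof -
  have "\<exists>!z. perm_pair_mat \<sigma> \<tau> $ i $ fst z $ snd z = 1" for i
    by (rule ex1I[of _ "(\<sigma> i, \<tau> i)"]) (auto simp: perm_pair_mat_def)
  moreover have "\<exists>!z. perm_pair_mat \<sigma> \<tau> $ fst z $ j $ snd z = 1" for j
    by (rule ex1I[of _ "(inv \<sigma> j, \<tau> (inv \<sigma> j))"])
       (auto simp: perm_pair_mat_def permutes_inverses[OF \<sigma>] permutes_inv_eq[OF \<sigma>])
  moreover have "\<exists>!z. perm_pair_mat \<sigma> \<tau> $ fst z $ snd z $ k = 1" for k
    by (rule ex1I[of _ "(inv \<tau> k, \<sigma> (inv \<tau> k))"])
       (auto simp: perm_pair_mat_def permutes_inverses[OF \<tau>] permutes_inv_eq[OF \<tau>])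
  ultimately show ?thesis
    unfolding Lambda2_def by (simp add: perm_pair_mat_def)
qed

lemma perm_pair_mat_product_weights:
  fixes a b :: "('n::finite \<Rightarrow> 'n) \<Rightarrow> real"
  shows "(\<Sum>(\<sigma>, \<tau>) \<in> P \<times> P. (a \<sigma> * b \<tau>) *\<^sub>R perm_pair_mat \<sigma> \<tau>)
    = (\<chi> i j k. (\<Sum>\<sigma>\<in>P. a \<sigma> * of_bool (\<sigma> i = j)) * (\<Sum>\<tau>\<in>P. b \<tau> * of_bool (\<tau> i = k)))"
  unfolding vec_eq_iff sum_product sum.cartesian_product
  by (simp add: perm_pair_mat_def case_prod_unfold of_bool_conj mult_ac
      del: sum_mult_of_bool_eq sum_of_bool_mult_eq)

definition unit_diff :: "'n \<Rightarrow> 'n \<Rightarrow> 'n \<Rightarrow> real" where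
  "unit_diff p q i = of_bool (i = p) - of_bool (i = q)"

definition perturbed_uniform :: "'n::finite \<Rightarrow> 'n \<Rightarrow> real \<Rightarrow> 'n mat3" where
  "perturbed_uniform p q s =
    (\<chi> i j k. 1 / real CARD('n) ^ 2 + s * (unit_diff p q i * unit_diff p q j * unit_diff p q k))"

text \<open>Signed weights on permutations whose marginals factor the cube of \<open>x = e\<^sub>p - e\<^sub>q\<close>:
  \<open>\<Sum>\<sigma>. swap_weight p q \<sigma> * of_bool (\<sigma> i = j) = x i * x j\<close>, while the marginal of
  \<open>cycle_weight\<close> has both rows \<open>p\<close> and \<open>q\<close> equal to \<open>x\<close>.  The latter is impossible
  with permutations moving only \<open>p\<close> and \<open>q\<close>; this is where a third index \<open>r\<close>, hence
  \<open>n > 2\<close>, is needed.\<close>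

definition swap_weight :: "'n \<Rightarrow> 'n \<Rightarrow> ('n \<Rightarrow> 'n) \<Rightarrow> real" where
  "swap_weight p q \<sigma> = of_bool (\<sigma> = id) - of_bool (\<sigma> = Transposition.transpose p q)"

definition cycle_weight :: "'n \<Rightarrow> 'n \<Rightarrow> 'n \<Rightarrow> ('n \<Rightarrow> 'n) \<Rightarrow> real" where
  "cycle_weight p q r \<tau> =
    of_bool (\<tau> = Transposition.transpose q r)
    + of_bool (\<tau> = Transposition.transpose q r \<circ> Transposition.transpose p q)
    - of_bool (\<tau> = Transposition.transpose p q \<circ> Transposition.transpose q r)
    - of_bool (\<tau> = Transposition.transpose p r)"

lemma sum_swap_weight:
  "(\<Sum>\<sigma> | \<sigma> permutes (UNIV :: 'n::finite set). swap_weight p q \<sigma>) = 0"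
  by (simp add: swap_weight_def sum_subtractf permutes_id permutes_swap_id)

lemma abs_swap_weight_le: "\<bar>swap_weight p q \<sigma>\<bar> \<le> 1"
  by (simp add: swap_weight_def of_bool_def)

lemma abs_cycle_weight_le: "\<bar>cycle_weight p q r \<tau>\<bar> \<le> 2"
  by (simp add: cycle_weight_def of_bool_def)

lemma swap_cycle_weight_marginals:
  fixes p q r :: "'n::finite"
  assumes "p \<noteq> q" "q \<noteq> r" "p \<noteq> r"
  shows "(\<Sum>\<sigma> | \<sigma> permutes UNIV. swap_weight p q \<sigma> * of_bool (\<sigma> i = j))
      * (\<Sum>\<tau> | \<tau> permutes UNIV. cycle_weight p q r \<tau> * of_bool (\<tau> i = k))
    = unit_diff p q i * unit_diff p q j * unit_diff p q k"
proof -
  let ?T = "Transposition.transpose :: 'n \<Rightarrow> 'n \<Rightarrow> 'n \<Rightarrow> 'n"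
  let ?P = "{\<sigma>::'n \<Rightarrow> 'n. \<sigma> permutes UNIV}"
  have "id \<in> ?P" "?T p q \<in> ?P" "?T q r \<in> ?P" "?T p r \<in> ?P"
      "?T q r \<circ> ?T p q \<in> ?P" "?T p q \<circ> ?T q r \<in> ?P"
    by (simp_all add: permutes_id permutes_swap_id permutes_compose)
  then have "(\<Sum>\<sigma>\<in>?P. swap_weight p q \<sigma> * of_bool (\<sigma> i = j))
        = of_bool (i = j) - of_bool (?T p q i = j)"
      "(\<Sum>\<tau>\<in>?P. cycle_weight p q r \<tau> * of_bool (\<tau> i = k))
        = of_bool (?T q r i = k) + of_bool ((?T q r \<circ> ?T p q) i = k)
          - of_bool ((?T p q \<circ> ?T q r) i = k) - of_bool (?T p r i = k)"
    by (simp_all add: swap_weight_def cycle_weight_def algebra_simps sum_subtractf sum.distrib)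
  then show ?thesis
    using assms by (auto simp: unit_diff_def transpose_def)
qed

lemma perturbed_uniform_eq_perm_pair_combination:
  fixes p q r :: "'n::finite"
  assumes distinct: "p \<noteq> q" "q \<noteq> r" "p \<noteq> r"
  defines "N \<equiv> fact CARD('n) :: real"
  shows "perturbed_uniform p q s =
    (\<Sum>(\<sigma>, \<tau>) \<in> {\<sigma>. \<sigma> permutes UNIV} \<times> {\<tau>. \<tau> permutes UNIV}.
      (1 / N * (1 / N) + s * (swap_weight p q \<sigma> * cycle_weight p q r \<tau>)) *\<^sub>R perm_pair_mat \<sigma> \<tau>)"
proof -
  let ?P = "{\<sigma>::'n \<Rightarrow> 'n. \<sigma> permutes UNIV}"
  have uniform_marginal: "(\<Sum>\<sigma>\<in>?P. 1 / N * of_bool (\<sigma> i = j)) = 1 / CARD('n)" for i j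
  proof -
    have "(\<Sum>\<sigma>\<in>?P. 1 / N * of_bool (\<sigma> i = j)) = 1 / N * (\<Sum>\<sigma>\<in>?P. of_bool (\<sigma> i = j))"
      by (rule sum_distrib_left[symmetric])
    also have "\<dots> = 1 / N * real (card (?P \<inter> {\<sigma>. \<sigma> i = j}))"
      by simp
    also have "?P \<inter> {\<sigma>. \<sigma> i = j} = {\<sigma>. \<sigma> permutes UNIV \<and> \<sigma> i = j}"
      by blast
    also have "real (card {\<sigma>. \<sigma> permutes UNIV \<and> \<sigma> i = j}) = N / CARD('n)"
      unfolding N_def by (rule card_permutes_with_value)
    finally show ?thesis
      by (simp add: N_def)
  qed
  have "(\<Sum>(\<sigma>, \<tau>) \<in> ?P \<times> ?P.
        (1 / N * (1 / N) + s * (swap_weight p q \<sigma> * cycle_weight p q r \<tau>)) *\<^sub>R perm_pair_mat \<sigma> \<tau>)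
      = (\<Sum>(\<sigma>, \<tau>) \<in> ?P \<times> ?P. (1 / N * (1 / N)) *\<^sub>R perm_pair_mat \<sigma> \<tau>)
        + s *\<^sub>R (\<Sum>(\<sigma>, \<tau>) \<in> ?P \<times> ?P.
            (swap_weight p q \<sigma> * cycle_weight p q r \<tau>) *\<^sub>R perm_pair_mat \<sigma> \<tau>)"
    by (simp add: case_prod_unfold scaleR_add_left sum.distrib scaleR_sum_right)
  then show ?thesis
    unfolding perm_pair_mat_product_weights uniform_marginal swap_cycle_weight_marginals[OF distinct]
    by (simp add: perturbed_uniform_def vec_eq_iff power2_eq_square)
qed

lemma perturbed_uniform_in_convex_hull:
  fixes p q r :: "'n::finite"
  assumes distinct: "p \<noteq> q" "q \<noteq> r" "p \<noteq> r"
    and small: "\<bar>s\<bar> \<le> 1 / (2 * (fact CARD('n))^2)"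
  shows "perturbed_uniform p q s \<in> convex hull Lambda2"
proof -
  let ?P = "{\<sigma>::'n \<Rightarrow> 'n. \<sigma> permutes UNIV}"
  define N where "N = (fact CARD('n) :: real)"
  define w where "w = (\<lambda>(\<sigma>, \<tau>). 1 / N * (1 / N) + s * (swap_weight p q \<sigma> * cycle_weight p q r \<tau>))"
  have N_pos: "N > 0" and card_P: "real (card ?P) = N"
    by (simp_all add: N_def card_permutations)
  have "(\<Sum>z \<in> ?P \<times> ?P. w z) = (\<Sum>\<sigma>\<in>?P. \<Sum>\<tau>\<in>?P.
      1 / N * (1 / N) + (s * swap_weight p q \<sigma>) * cycle_weight p q r \<tau>)"
    by (simp add: w_def sum.cartesian_product mult.assoc)
  also have "\<dots> = real (card ?P) * real (card ?P) * (1 / N * (1 / N))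
      + (\<Sum>\<sigma>\<in>?P. s * swap_weight p q \<sigma>) * (\<Sum>\<tau>\<in>?P. cycle_weight p q r \<tau>)"
    by (simp add: sum.distrib sum_product)
  also have "\<dots> = 1"
    using card_P N_pos sum_swap_weight[of p q] by (simp flip: sum_distrib_left)
  finally have weights_sum: "(\<Sum>z \<in> ?P \<times> ?P. w z) = 1" .
  have weights_nonneg: "w z \<ge> 0" for z
  proof -
    have "\<bar>s * (swap_weight p q (fst z) * cycle_weight p q r (snd z))\<bar> \<le> 1 / (2 * N^2) * (1 * 2)"
      unfolding abs_mult using small abs_swap_weight_le abs_cycle_weight_le
      by (intro mult_mono) (auto simp: N_def)
    then show ?thesis
      by (simp add: w_def case_prod_unfold abs_le_iff power2_eq_square)
  qed
  have "(\<Sum>z \<in> ?P \<times> ?P. w z *\<^sub>R perm_pair_mat (fst z) (snd z)) \<in> convex hull Lambda2"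
    by (rule convex_sum)
       (auto simp: weights_sum weights_nonneg intro!: hull_inc perm_pair_mat_in_Lambda2)
  then show ?thesis
    using perturbed_uniform_eq_perm_pair_combination[OF distinct, of s]
    by (simp add: w_def N_def case_prod_unfold)
qed

lemma prod_add_plus_prod_diff_two_point_support:
  fixes f :: "'a \<Rightarrow> 'b::comm_ring_1"
  assumes "finite I" "p \<in> I" "q \<in> I" "p \<noteq> q"
    and support: "\<And>i. i \<in> I \<Longrightarrow> i \<noteq> p \<Longrightarrow> i \<noteq> q \<Longrightarrow> f i = 0"
  shows "(\<Prod>i\<in>I. c + f i) + (\<Prod>i\<in>I. c - f i) = 2 * c ^ (card I - 2) * (c^2 + f p * f q)"
proof -
  define R where "R = I - {p, q}"
  have I: "I = insert p (insert q R)" "p \<notin> insert q R" "q \<notin> R" "finite R"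
    using assms by (auto simp: R_def)
  have "card R = card I - 2"
    using assms by (simp add: R_def card_Diff_subset)
  moreover have "(\<Prod>i\<in>R. c + f i) = c ^ card R" "(\<Prod>i\<in>R. c - f i) = c ^ card R"
    using support by (simp_all add: R_def)
  ultimately show ?thesis
    unfolding I(1) using I(2-4) by (simp add: algebra_simps power2_eq_square)
qed

lemma unit_diff_mult_nonpos:
  assumes "p \<noteq> q" "j \<noteq> j'"
  shows "unit_diff p q j * unit_diff p q j' \<le> 0"
  using assms by (auto simp: unit_diff_def)

lemma prod_add_plus_prod_diff_unit_diff_cube:
  fixes p q :: "'n::finite" and \<sigma> \<tau> :: "'n \<Rightarrow> 'n"
  assumes "p \<noteq> q"
  defines "x \<equiv> unit_diff p q"
  shows "(\<Prod>i\<in>UNIV. c + s * (x i * x (\<sigma> i) * x (\<tau> i)))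
      + (\<Prod>i\<in>UNIV. c - s * (x i * x (\<sigma> i) * x (\<tau> i)))
    = 2 * c ^ (CARD('n) - 2) * (c^2 - s^2 * ((x (\<sigma> p) * x (\<sigma> q)) * (x (\<tau> p) * x (\<tau> q))))"
  using assms
  by (subst prod_add_plus_prod_diff_two_point_support[where p = p and q = q])
     (auto simp: x_def unit_diff_def power2_eq_square)

lemma per3_perturbed_uniform_pair_less:
  fixes p q :: "'n::finite"
  assumes "p \<noteq> q" "s \<noteq> 0"
  shows "per3 (perturbed_uniform p q s) + per3 (perturbed_uniform p q (-s))
    < 2 * (fact CARD('n) / real CARD('n) ^ CARD('n))^2"
proof -
  let ?P = "{\<sigma>::'n \<Rightarrow> 'n. \<sigma> permutes UNIV}"
  define n where "n = CARD('n)"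
  define c where "c = 1 / real n ^ 2"
  define x where "x = unit_diff p q"
  define g where "g \<sigma> \<tau> = (x (\<sigma> p) * x (\<sigma> q)) * (x (\<tau> p) * x (\<tau> q))" for \<sigma> \<tau> :: "'n \<Rightarrow> 'n"
  have "card {p, q} \<le> n"
    unfolding n_def by (rule card_mono) auto
  then have "n \<ge> 2"
    using assms by simp
  then have c_pow: "c ^ n = c ^ (n - 2) * c^2"
    by (metis le_add_diff_inverse2 power_add)
  have c_pos: "c > 0"
    by (simp add: c_def n_def)
  have g_nonneg: "g \<sigma> \<tau> \<ge> 0" if "\<sigma> \<in> ?P" "\<tau> \<in> ?P" for \<sigma> \<tau>
  proof -
    have "\<sigma> p \<noteq> \<sigma> q" "\<tau> p \<noteq> \<tau> q"
      using that assms permutes_inj[of _ UNIV] by (auto dest: injD)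
    then show ?thesis
      unfolding g_def x_def using assms by (intro mult_nonpos_nonpos unit_diff_mult_nonpos)
  qed
  have "per3 (perturbed_uniform p q s) + per3 (perturbed_uniform p q (-s))
      = (\<Sum>(\<sigma>, \<tau>) \<in> ?P \<times> ?P. 2 * c ^ (n - 2) * (c^2 - s^2 * g \<sigma> \<tau>))"
    by (simp add: per3_eq_sum_permutes perturbed_uniform_def sum.distrib[symmetric] case_prod_unfold
        prod_add_plus_prod_diff_unit_diff_cube[OF assms(1)] c_def n_def g_def x_def)
  also have "\<dots> < (\<Sum>(\<sigma>, \<tau>) \<in> ?P \<times> ?P. 2 * c ^ n)"
  proof (rule sum_strict_mono_ex1)
    show "\<forall>z \<in> ?P \<times> ?P. (case z of (\<sigma>, \<tau>) \<Rightarrow> 2 * c ^ (n - 2) * (c^2 - s^2 * g \<sigma> \<tau>))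
        \<le> (case z of (\<sigma>, \<tau>) \<Rightarrow> 2 * c ^ n)"
      using c_pos g_nonneg by (auto simp: c_pow mult_le_cancel_left_pos)
    have "g id id = 1"
      using assms by (simp add: g_def x_def unit_diff_def)
    then show "\<exists>z \<in> ?P \<times> ?P. (case z of (\<sigma>, \<tau>) \<Rightarrow> 2 * c ^ (n - 2) * (c^2 - s^2 * g \<sigma> \<tau>))
        < (case z of (\<sigma>, \<tau>) \<Rightarrow> 2 * c ^ n)"
      using c_pos assms by (intro bexI[of _ "(id, id)"]) (auto simp: c_pow permutes_id)
  qed simp
  also have "\<dots> = 2 * (fact n / real n ^ n)^2"
    by (simp add: card_permutations c_def n_def power_divide power_mult_distrib
        power_mult[symmetric] power2_eq_square field_simps)
  finally show ?thesis
    by (simp add: n_def)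
qed

theorem lemma3p2:
  assumes "CARD('n::finite) > 2"
  shows "\<exists>A :: 'n mat3. A \<in> convex hull Lambda2 \<and>
    (per3 A < (fact CARD('n) / real CARD('n) ^ CARD('n))^2 \<or>
     (per3 A = (fact CARD('n) / real CARD('n) ^ CARD('n))^2 \<and>
      A \<noteq> (1 / real CARD('n) ^ 2) *\<^sub>R J3))"
proof -
  obtain T :: "'n set" where "card T = 3"
    using assms ex_card[of 3 "UNIV :: 'n set"] by auto
  then obtain p q r :: 'n where distinct: "p \<noteq> q" "q \<noteq> r" "p \<noteq> r"
    by (auto simp: card_3_iff)
  define s where "s = 1 / (2 * (fact CARD('n))^2 :: real)"
  have "s \<noteq> 0" and small: "\<bar>s\<bar> \<le> s" "\<bar>-s\<bar> \<le> s"
    by (simp_all add: s_def)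
  have "perturbed_uniform p q s \<in> convex hull Lambda2"
    "perturbed_uniform p q (-s) \<in> convex hull Lambda2"
    using perturbed_uniform_in_convex_hull[OF distinct] small by (simp_all add: s_def)
  moreover have "per3 (perturbed_uniform p q s) + per3 (perturbed_uniform p q (-s))
      < 2 * (fact CARD('n) / real CARD('n) ^ CARD('n))^2"
    by (rule per3_perturbed_uniform_pair_less[OF distinct(1) \<open>s \<noteq> 0\<close>])
  then have "per3 (perturbed_uniform p q s) < (fact CARD('n) / real CARD('n) ^ CARD('n))^2
      \<or> per3 (perturbed_uniform p q (-s)) < (fact CARD('n) / real CARD('n) ^ CARD('n))^2"
    by linarith
  ultimately show ?thesis
    by blast
qed

end
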